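(* Let $L$ be a real-valued Lévy process with characteristic triplet $(b,0,F)$ whose symbol $A$ satisfies the Gårding condition with index $Y\in(0,2)$, i.e. there exist constants $C_2>0$, $C_3\ge0$ and $0\le Y'<Y$ with $\Re(A(u))\ge C_2|u|^Y-C_3(1+u^2)^{Y'/2}$ for all $u\in\mathds R$. Then $\int_{-1}^1|x|^\alpha F(dx)=\infty$ for all $\alpha<Y$. In particular, the Blumenthal–Getoor index $\beta$ of $L$ satisfies $\beta\ge Y$.
   Context: The symbol of $L$ (w.r.t. a truncation function $h$) is $A(u)=iub-\int(e^{-iuy}-1+iuh(y))F(dy)$, so $\Re(A(u))=\int(1-\cos(uy))F(dy)$. The Blumenthal–Getoor index is $\beta:=\inf\{\alpha>0:\int_{[-1,1]}|x|^\alpha F(dx)<\infty\}$. *)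

theory Defs
  imports "HOL-Analysis.Analysis"
begin

definition levy_measure :: "real measure \<Rightarrow> bool" where
  "levy_measure F \<longleftrightarrow> sets F = sets borel \<and> emeasure F {0} = 0 \<and>
     (\<integral>\<^sup>+ x. ennreal (min 1 (x\<^sup>2)) \<partial>F) < \<infinity>"

definition truncation_function :: "(real \<Rightarrow> real) \<Rightarrow> bool" where
  "truncation_function h \<longleftrightarrow> h \<in> borel_measurable borel \<and> bounded (range h) \<and>
     (\<exists>e>0. \<forall>x. \<bar>x\<bar> < e \<longrightarrow> h x = x)"

definition levy_symbol :: "real \<Rightarrow> real measure \<Rightarrow> (real \<Rightarrow> real) \<Rightarrow> real \<Rightarrow> complex" where
  "levy_symbol b F h u =
     \<i> * complex_of_real u * complex_of_real b -
     (\<integral> y. (exp (- \<i> * complex_of_real (u * y)) - 1 + \<i> * complex_of_real (u * h y)) \<partial>F)"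

text \<open>Blumenthal--Getoor index (extended real; infimum of the empty set is infinity).\<close>
definition bg_index :: "real measure \<Rightarrow> ereal" where
  "bg_index F = Inf {ereal \<alpha> | \<alpha>. \<alpha> > 0 \<and>
     (\<integral>\<^sup>+ x. ennreal (\<bar>x\<bar> powr \<alpha>) * indicator {-1..1} x \<partial>F) < \<infinity>}"

end

theory Submission
  imports Defs
begin

text \<open>If the truncated moment \<open>\<integral> |x|^a F(dx)\<close> over \<open>[-1, 1]\<close> were finite for some \<open>a < Y\<close>,
  then \<open>1 - cos t \<le> 2 |t|^a\<close> (for \<open>0 < a \<le> 2\<close>) together with the finiteness of
  \<open>F {|x| > 1}\<close> would give \<open>Re A(u) = O(|u|^a)\<close>. Enlarging \<open>a\<close> so that also \<open>Y' \<le> a\<close>,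
  the Garding lower bound then forces \<open>C\<^sub>2 u^Y = O(u^a)\<close> as \<open>u \<rightarrow> \<infinity>\<close>, which is
  impossible since \<open>a < Y\<close>.\<close>

abbreviation small_jump_moment :: "real measure \<Rightarrow> real \<Rightarrow> ennreal" where
  "small_jump_moment F \<alpha> \<equiv> \<integral>\<^sup>+ x. ennreal (\<bar>x\<bar> powr \<alpha>) * indicator {-1..1} x \<partial>F"

lemma one_minus_cos_le_square: "1 - cos (t::real) \<le> t\<^sup>2 / 2"
proof -
  have "cos t = 1 - 2 * (sin (t/2))\<^sup>2" using cos_double_sin[of "t/2"] by simp
  moreover have "(sin (t/2))\<^sup>2 \<le> (t/2)\<^sup>2"
    by (metis abs_ge_zero abs_sin_x_le_abs_x power2_abs power_mono)
  ultimately show ?thesis by (simp add: power_divide)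
qed

lemma one_minus_cos_le_powr:
  assumes "0 < a" "a \<le> 2"
  shows "1 - cos (t::real) \<le> 2 * \<bar>t\<bar> powr a"
proof (cases "\<bar>t\<bar> \<ge> 1")
  case True
  then have "1 \<le> \<bar>t\<bar> powr a" using assms by (simp add: ge_one_powr_ge_zero)
  then show ?thesis using cos_ge_minus_one[of t] by linarith
next
  case False
  have "t\<^sup>2 = \<bar>t\<bar> powr 2" by (simp add: powr_numeral)
  also have "\<dots> \<le> \<bar>t\<bar> powr a" using False assms by (intro powr_mono') auto
  finally show ?thesis using one_minus_cos_le_square[of t] powr_ge_zero[of "\<bar>t\<bar>" a] by linarith
qed

lemma one_plus_square_powr_le:
  fixes u :: real
  assumes "1 \<le> u" "0 \<le> s" "s \<le> a" "a \<le> 2"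
  shows "(1 + u\<^sup>2) powr (s / 2) \<le> 4 * u powr a"
proof -
  have "1 \<le> u * u" using assms(1) by (metis mult_mono' order.trans zero_le_one mult_1_left)
  then have "1 + u\<^sup>2 \<le> (2 * u) powr 2" using assms(1) by (simp add: powr_numeral power2_eq_square)
  then have "(1 + u\<^sup>2) powr (s / 2) \<le> ((2 * u) powr 2) powr (s / 2)"
    using assms(2) by (intro powr_mono2) auto
  also have "\<dots> = (2 * u) powr s" by (simp add: powr_powr)
  also have "\<dots> \<le> (2 * u) powr a" using assms by (intro powr_mono) auto
  also have "\<dots> = 2 powr a * u powr a" using assms(1) by (simp add: powr_mult)
  also have "\<dots> \<le> 2 powr (2::real) * u powr a" using assms by (intro mult_right_mono powr_mono) auto
  finally show ?thesis by simp
qed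

lemma powr_not_dominated:
  fixes C D a Y :: real
  assumes "a < Y" "0 < C"
  shows "\<not> (\<forall>u\<ge>1. C * u powr Y \<le> D * u powr a)"
proof
  assume dom: "\<forall>u\<ge>1. C * u powr Y \<le> D * u powr a"
  define u where "u = (\<bar>D\<bar> / C + 1) powr (1 / (Y - a))"
  have base: "1 \<le> \<bar>D\<bar> / C + 1" using assms by simp
  have u: "1 \<le> u" unfolding u_def using base assms by (simp add: ge_one_powr_ge_zero)
  have "C * (u powr (Y - a) * u powr a) \<le> D * u powr a"
    using dom u by (simp add: powr_add[symmetric])
  then have "C * u powr (Y - a) \<le> D"
    using u by (simp add: mult.assoc[symmetric])
  moreover have "u powr (Y - a) = \<bar>D\<bar> / C + 1"
    unfolding u_def using assms base by (simp add: powr_powr)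
  then have "C * u powr (Y - a) = \<bar>D\<bar> + C" using assms(2) by (simp add: field_simps)
  ultimately show False using assms(2) by linarith
qed

lemma small_jump_moment_antimono:
  assumes "\<alpha> \<le> a"
  shows "small_jump_moment F a \<le> small_jump_moment F \<alpha>"
proof (rule nn_integral_mono)
  fix x :: real
  show "ennreal (\<bar>x\<bar> powr a) * indicator {-1..1} x \<le> ennreal (\<bar>x\<bar> powr \<alpha>) * indicator {-1..1} x"
  proof (cases "x \<in> {-1..1}")
    case True
    then have "\<bar>x\<bar> powr a \<le> \<bar>x\<bar> powr \<alpha>" using assms by (intro powr_mono') auto
    then show ?thesis using True by (simp add: ennreal_leI)
  qed simp
qed

lemma levy_measure_large_jumps_finite:
  assumes "levy_measure F"
  shows "emeasure F {x. 1 < \<bar>x\<bar>} < \<infinity>"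
proof -
  have sets: "{x::real. 1 < \<bar>x\<bar>} \<in> sets F"
    using assms unfolding levy_measure_def by auto
  have "emeasure F {x. 1 < \<bar>x\<bar>} = (\<integral>\<^sup>+ x. indicator {x. 1 < \<bar>x\<bar>} x \<partial>F)"
    using sets by simp
  also have "\<dots> \<le> (\<integral>\<^sup>+ x. ennreal (min 1 (x\<^sup>2)) \<partial>F)"
  proof (rule nn_integral_mono)
    fix x :: real
    have "1 < \<bar>x\<bar> \<Longrightarrow> 1 < x\<^sup>2"
      by (metis abs_ge_zero less_1_mult power2_abs power2_eq_square)
    then show "indicator {x. 1 < \<bar>x\<bar>} x \<le> ennreal (min 1 (x\<^sup>2))"
      by (auto simp: indicator_def)
  qed
  also have "\<dots> < \<infinity>" using assms unfolding levy_measure_def by auto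
  finally show ?thesis .
qed

lemma Re_levy_symbol_le:
  assumes "(\<integral>\<^sup>+ y. ennreal (1 - cos (u * y)) \<partial>F) \<le> ennreal B" "0 \<le> B"
  shows "Re (levy_symbol b F h u) \<le> B"
proof -
  define f where "f y = exp (- \<i> * complex_of_real (u * y)) - 1 + \<i> * complex_of_real (u * h y)" for y
  have Re_symbol: "Re (levy_symbol b F h u) = - Re (integral\<^sup>L F f)"
    unfolding levy_symbol_def f_def by simp
  show ?thesis
  proof (cases "integrable F f")
    case False
    then show ?thesis using assms(2) Re_symbol by (simp add: not_integrable_integral_eq)
  next
    case True
    have "Re (integral\<^sup>L F f) = integral\<^sup>L F (\<lambda>y. Re (f y))" using True by simp
    also have "(\<lambda>y. Re (f y)) = (\<lambda>y. cos (u * y) - 1)"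
      unfolding f_def by (auto simp: Re_exp)
    finally have "Re (levy_symbol b F h u) = integral\<^sup>L F (\<lambda>y. 1 - cos (u * y))"
      using Re_symbol by (simp add: integral_minus[symmetric] del: integral_minus)
    also have "\<dots> \<le> B" using integral_real_bounded[OF assms(2,1)] .
    finally show ?thesis .
  qed
qed

lemma nn_integral_one_minus_cos_le:
  assumes sets: "sets F = sets borel" and a: "0 < a" "a \<le> 2"
  shows "(\<integral>\<^sup>+ y. ennreal (1 - cos (u * y)) \<partial>F)
    \<le> ennreal (2 * \<bar>u\<bar> powr a) * small_jump_moment F a + 2 * emeasure F {x. 1 < \<bar>x\<bar>}"
proof -
  have m1: "(\<lambda>y. ennreal (\<bar>y\<bar> powr a) * indicator {-1..1} y) \<in> borel_measurable F"
   and m2: "(\<lambda>y. indicator {x::real. 1 < \<bar>x\<bar>} y :: ennreal) \<in> borel_measurable F"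
    by (subst measurable_cong_sets[OF sets refl], measurable)+
  have large: "{x::real. 1 < \<bar>x\<bar>} \<in> sets F" unfolding sets by measurable
  have "(\<integral>\<^sup>+ y. ennreal (1 - cos (u * y)) \<partial>F) \<le>
    (\<integral>\<^sup>+ y. ennreal (2 * \<bar>u\<bar> powr a) * (ennreal (\<bar>y\<bar> powr a) * indicator {-1..1} y)
          + 2 * indicator {x. 1 < \<bar>x\<bar>} y \<partial>F)"
  proof (rule nn_integral_mono)
    fix y :: real
    show "ennreal (1 - cos (u * y)) \<le> ennreal (2 * \<bar>u\<bar> powr a) * (ennreal (\<bar>y\<bar> powr a) * indicator {-1..1} y)
          + 2 * indicator {x. 1 < \<bar>x\<bar>} y"
    proof (cases "\<bar>y\<bar> \<le> 1")
      case True
      have "1 - cos (u * y) \<le> 2 * \<bar>u\<bar> powr a * \<bar>y\<bar> powr a"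
        using one_minus_cos_le_powr[OF a, of "u * y"] by (simp add: abs_mult powr_mult)
      then have "ennreal (1 - cos (u * y)) \<le> ennreal (2 * \<bar>u\<bar> powr a) * ennreal (\<bar>y\<bar> powr a)"
        by (simp add: ennreal_mult[symmetric] ennreal_leI)
      then show ?thesis using True by (auto simp: indicator_def abs_le_iff)
    next
      case False
      have "ennreal (1 - cos (u * y)) \<le> ennreal 2"
        using cos_ge_minus_one[of "u * y"] by (intro ennreal_leI) linarith
      then show ?thesis using False by (auto simp: indicator_def)
    qed
  qed
  also have "\<dots> = ennreal (2 * \<bar>u\<bar> powr a) * small_jump_moment F a + 2 * emeasure F {x. 1 < \<bar>x\<bar>}"
    using m1 m2 large by (simp add: nn_integral_add nn_integral_cmult)
  finally show ?thesis .
qed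

lemma Re_levy_symbol_le_moment:
  assumes levy: "levy_measure F" and a: "0 < a" "a \<le> 2"
    and moment: "small_jump_moment F a < \<infinity>"
  shows "Re (levy_symbol b F h u) \<le>
    2 * \<bar>u\<bar> powr a * enn2real (small_jump_moment F a) + 2 * enn2real (emeasure F {x. 1 < \<bar>x\<bar>})"
proof (rule Re_levy_symbol_le)
  have "sets F = sets borel" using levy unfolding levy_measure_def by auto
  note bound = nn_integral_one_minus_cos_le[OF this a, of u]
  show "(\<integral>\<^sup>+ y. ennreal (1 - cos (u * y)) \<partial>F) \<le> ennreal
    (2 * \<bar>u\<bar> powr a * enn2real (small_jump_moment F a) + 2 * enn2real (emeasure F {x. 1 < \<bar>x\<bar>}))"
    using bound moment levy_measure_large_jumps_finite[OF levy]
    by (simp add: ennreal_plus ennreal_mult less_top ennreal_enn2real)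
qed simp

lemma garding_imp_small_jump_moment_infinite:
  assumes levy: "levy_measure F"
    and Y: "0 < Y" "Y < 2" and C2: "C2 > 0" and C3: "C3 \<ge> 0" and Y': "0 \<le> Y'" "Y' < Y"
    and garding: "\<And>u. Re (levy_symbol b F h u) \<ge> C2 * \<bar>u\<bar> powr Y - C3 * (1 + u\<^sup>2) powr (Y' / 2)"
    and "\<alpha> < Y"
  shows "small_jump_moment F \<alpha> = \<infinity>"
proof (rule ccontr)
  assume "small_jump_moment F \<alpha> \<noteq> \<infinity>"
  define a where "a = max \<alpha> ((Y + Y') / 2)"
  have a: "0 < a" "a \<le> 2" "a < Y" "Y' \<le> a" "\<alpha> \<le> a"
    unfolding a_def using Y Y' \<open>\<alpha> < Y\<close> by (auto simp: max_def)
  have moment: "small_jump_moment F a < \<infinity>"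
    using small_jump_moment_antimono[OF a(5), of F] \<open>small_jump_moment F \<alpha> \<noteq> \<infinity>\<close>
    by (simp add: less_top order.strict_trans1)
  define m where "m = enn2real (small_jump_moment F a)"
  define p where "p = enn2real (emeasure F {x. 1 < \<bar>x\<bar>})"
  have "C2 * u powr Y \<le> (2 * m + 2 * p + 4 * C3) * u powr a" if u: "1 \<le> u" for u :: real
  proof -
    have "C2 * u powr Y - C3 * (1 + u\<^sup>2) powr (Y' / 2) \<le> 2 * u powr a * m + 2 * p"
      using garding[of u] Re_levy_symbol_le_moment[OF levy a(1,2) moment, of b h u] u
      unfolding m_def p_def by simp
    moreover have "C3 * (1 + u\<^sup>2) powr (Y' / 2) \<le> C3 * (4 * u powr a)"
      using one_plus_square_powr_le[OF u Y'(1) a(4,2)] C3 by (rule mult_left_mono)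
    moreover have "p \<le> p * u powr a"
      using mult_left_mono[of 1 "u powr a" p] u a by (simp add: p_def ge_one_powr_ge_zero)
    ultimately show ?thesis by (simp add: algebra_simps)
  qed
  then show False using powr_not_dominated[OF a(3) C2] by blast
qed

lemma bg_index_ge:
  assumes "\<And>\<alpha>. \<alpha> < Y \<Longrightarrow> small_jump_moment F \<alpha> = \<infinity>"
  shows "ereal Y \<le> bg_index F"
  unfolding bg_index_def
proof (rule Inf_greatest)
  fix z assume "z \<in> {ereal \<alpha> | \<alpha>. \<alpha> > 0 \<and> small_jump_moment F \<alpha> < \<infinity>}"
  then obtain \<alpha> where "z = ereal \<alpha>" "small_jump_moment F \<alpha> < \<infinity>" by auto
  then show "ereal Y \<le> z" using assms[of \<alpha>] by (cases "\<alpha> < Y") auto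
qed

theorem mainTheorem10:
  fixes b :: real and F :: "real measure" and h :: "real \<Rightarrow> real"
    and Y Y' C2 C3 :: real
  assumes levy: "levy_measure F"
    and trunc: "truncation_function h"
    and Y: "0 < Y" "Y < 2"
    and C2: "C2 > 0" and C3: "C3 \<ge> 0"
    and Y': "0 \<le> Y'" "Y' < Y"
    and garding: "\<And>u. Re (levy_symbol b F h u) \<ge> C2 * \<bar>u\<bar> powr Y - C3 * (1 + u\<^sup>2) powr (Y' / 2)"
  shows "(\<forall>\<alpha>::real. \<alpha> < Y \<longrightarrow>
            (\<integral>\<^sup>+ x. ennreal (\<bar>x\<bar> powr \<alpha>) * indicator {-1..1} x \<partial>F) = \<infinity>)
         \<and> bg_index F \<ge> ereal Y"
proof -
  have "small_jump_moment F \<alpha> = \<infinity>" if "\<alpha> < Y" for \<alpha>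
    using garding_imp_small_jump_moment_infinite[OF levy Y C2 C3 Y' garding that] .
  then show ?thesis using bg_index_ge[of Y F] by blast
qed

end
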